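(* Let $v,w\in\mathbb{R}^n\setminus\{0\}$ and $A\in\mathrm{GL}_n(\mathbb{R})$ satisfy $A\circ Q_v=Q_w\circ(A,A)$, i.e. $A(Q_v(\xi,\eta))=Q_w(A\xi,A\eta)$ for all $\xi,\eta\in\mathbb{R}^n$. Then $A=cT$ for some $c>0$ and $T\in O(n)$.
   Context: For $v\in\mathbb{R}^n$, $Q_v:\mathbb{R}^n\times\mathbb{R}^n\to\mathbb{R}^n$ is the symmetric bilinear map $Q_v(\xi,\eta)=\langle\xi,\eta\rangle v-\langle\xi,v\rangle\eta-\langle\eta,v\rangle\xi$, where $\langle\cdot,\cdot\rangle$ is the Euclidean inner product. $O(n)$ is the orthogonal group. *)

theory Defs
  imports "HOL-Analysis.Analysis"
begin

definition Qmap :: "real^'n \<Rightarrow> real^'n \<Rightarrow> real^'n \<Rightarrow> real^'n" where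
  "Qmap v xi eta = (xi \<bullet> eta) *\<^sub>R v - (xi \<bullet> v) *\<^sub>R eta - (eta \<bullet> v) *\<^sub>R xi"

end

theory Submission
  imports Defs
begin

text \<open>Put \<open>d = v - A\<^sup>T w\<close>. Expanding both sides, the intertwining relation becomes
  \<open>\<langle>\<xi>,\<eta>\<rangle> Av - \<langle>A\<xi>,A\<eta>\<rangle> w = \<langle>\<xi>,d\<rangle> A\<eta> + \<langle>\<eta>,d\<rangle> A\<xi>\<close>.
  If some \<open>x \<noteq> 0\<close> is orthogonal to \<open>d \<noteq> 0\<close>, the instances \<open>(x,x)\<close>, \<open>(d,x)\<close>, \<open>(d,d)\<close>
  put both \<open>Ax\<close> and \<open>Ad\<close> on the line through \<open>w\<close>, contradicting injectivity of \<open>A\<close>;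
  so \<open>d = 0\<close>, and then the instance \<open>\<xi> = \<eta>\<close> shows that \<open>|A\<xi>|\<^sup>2 / |\<xi>|\<^sup>2\<close> is constant.
  If no such \<open>x\<close> exists, the space is a line and \<open>A\<close> is trivially conformal.
  A conformal matrix is a positive multiple of an orthogonal one.\<close>

lemma inner_matrix_vector_mult_left:
  fixes A :: "real^'n^'n"
  shows "(A *v x) \<bullet> y = x \<bullet> (y v* A)"
  by (metis dot_lmul_matrix inner_commute)

lemma Qmap_intertwining_defect:
  fixes v w :: "real^'n" and A :: "real^'n^'n"
  assumes "A *v Qmap v xi eta = Qmap w (A *v xi) (A *v eta)"
  defines "d \<equiv> v - w v* A"
  shows "(xi \<bullet> eta) *\<^sub>R (A *v v) - ((A *v xi) \<bullet> (A *v eta)) *\<^sub>R w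
      = (xi \<bullet> d) *\<^sub>R (A *v eta) + (eta \<bullet> d) *\<^sub>R (A *v xi)"
proof -
  have "A *v Qmap v xi eta
      = (xi \<bullet> eta) *\<^sub>R (A *v v) - (xi \<bullet> v) *\<^sub>R (A *v eta) - (eta \<bullet> v) *\<^sub>R (A *v xi)"
    unfolding Qmap_def by (simp add: vec.diff matrix_vector_mult_scaleR)
  moreover have "Qmap w (A *v xi) (A *v eta) = ((A *v xi) \<bullet> (A *v eta)) *\<^sub>R w
      - (xi \<bullet> (w v* A)) *\<^sub>R (A *v eta) - (eta \<bullet> (w v* A)) *\<^sub>R (A *v xi)"
    unfolding Qmap_def inner_matrix_vector_mult_left by simp
  ultimately show ?thesis
    using assms(1) unfolding d_def inner_diff_right scaleR_diff_left
    by (simp add: algebra_simps)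
qed

lemma scaleR_eq_scaleR_imp_eq_divide:
  fixes a w :: "'a::real_vector"
  assumes "c \<noteq> 0" and "c *\<^sub>R a = b *\<^sub>R w"
  shows "a = (b / c) *\<^sub>R w"
proof -
  have "a = (1 / c) *\<^sub>R (c *\<^sub>R a)" using assms(1) by simp
  also have "\<dots> = (b / c) *\<^sub>R w" using assms(2) by simp
  finally show ?thesis .
qed

lemma inj_matrix_orthogonal_images_not_collinear:
  fixes A :: "real^'n^'n"
  assumes "inj ((*v) A)" and "x \<noteq> 0" and "d \<noteq> 0" and "x \<bullet> d = 0"
    and "A *v x = s *\<^sub>R w" and "A *v d = t *\<^sub>R w"
  shows False
proof -
  have "A *v (t *\<^sub>R x - s *\<^sub>R d) = 0"
    using assms(5,6) by (simp add: vec.diff matrix_vector_mult_scaleR)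
  then have "t *\<^sub>R x = s *\<^sub>R d"
    using assms(1) vec.inj_iff_eq_0 by fastforce
  then have "s * (d \<bullet> d) = 0"
    using assms(4) by (metis inner_scaleR_left inner_zero_left mult_zero_right)
  then have "A *v x = 0"
    using assms(3,5) by simp
  then show False
    using assms(1,2) vec.inj_iff_eq_0 by blast
qed

lemma defect_eq_0_if_orthogonal_vector:
  fixes A :: "real^'n^'n"
  assumes inj: "inj ((*v) A)"
    and H: "\<And>xi eta. (xi \<bullet> eta) *\<^sub>R a - ((A *v xi) \<bullet> (A *v eta)) *\<^sub>R w
              = (xi \<bullet> d) *\<^sub>R (A *v eta) + (eta \<bullet> d) *\<^sub>R (A *v xi)"
    and "x \<noteq> 0" and "x \<bullet> d = 0"
  shows "d = 0"
proof (rule ccontr)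
  assume "d \<noteq> 0"
  then have dd: "d \<bullet> d \<noteq> 0" by simp
  have a: "a = (((A *v x) \<bullet> (A *v x)) / (x \<bullet> x)) *\<^sub>R w"
    using H[of x x] \<open>x \<bullet> d = 0\<close> \<open>x \<noteq> 0\<close> by (intro scaleR_eq_scaleR_imp_eq_divide) auto
  have "(d \<bullet> d) *\<^sub>R (A *v x) = - ((A *v d) \<bullet> (A *v x)) *\<^sub>R w"
    using H[of d x] \<open>x \<bullet> d = 0\<close> by (simp add: inner_commute)
  then have Ax: "A *v x = (- ((A *v d) \<bullet> (A *v x)) / (d \<bullet> d)) *\<^sub>R w"
    using dd by (intro scaleR_eq_scaleR_imp_eq_divide) auto
  have "(2 * (d \<bullet> d)) *\<^sub>R (A *v d) = (d \<bullet> d) *\<^sub>R (A *v d) + (d \<bullet> d) *\<^sub>R (A *v d)"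
    by (metis mult_2 scaleR_left_distrib)
  also have "\<dots> = (d \<bullet> d) *\<^sub>R a - ((A *v d) \<bullet> (A *v d)) *\<^sub>R w"
    using H[of d d] by simp
  also have "\<dots> = ((d \<bullet> d) * ((A *v x) \<bullet> (A *v x)) / (x \<bullet> x) - (A *v d) \<bullet> (A *v d)) *\<^sub>R w"
    by (simp add: a scaleR_diff_left)
  finally have "(2 * (d \<bullet> d)) *\<^sub>R (A *v d)
      = ((d \<bullet> d) * ((A *v x) \<bullet> (A *v x)) / (x \<bullet> x) - (A *v d) \<bullet> (A *v d)) *\<^sub>R w" .
  then have Ad: "A *v d = (((d \<bullet> d) * ((A *v x) \<bullet> (A *v x)) / (x \<bullet> x) - (A *v d) \<bullet> (A *v d))
      / (2 * (d \<bullet> d))) *\<^sub>R w"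
    using dd by (intro scaleR_eq_scaleR_imp_eq_divide) auto
  show False
    using inj_matrix_orthogonal_images_not_collinear[OF inj assms(3) \<open>d \<noteq> 0\<close> assms(4) Ax Ad] .
qed

lemma conformal_if_defect_eq_0:
  fixes A :: "real^'n^'n" and x :: "real^'n" and a w :: "'a::real_vector"
  assumes "inj ((*v) A)" and "w \<noteq> 0" and "x \<noteq> 0"
    and H: "\<And>y. (y \<bullet> y) *\<^sub>R a = ((A *v y) \<bullet> (A *v y)) *\<^sub>R w"
  shows "\<exists>\<mu>>0. \<forall>y. (A *v y) \<bullet> (A *v y) = \<mu> * (y \<bullet> y)"
proof (intro exI conjI allI)
  define \<mu> where "\<mu> = ((A *v x) \<bullet> (A *v x)) / (x \<bullet> x)"
  have "A *v x \<noteq> 0"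
    using assms(1,3) vec.inj_iff_eq_0 by blast
  then show "\<mu> > 0"
    using assms(3) by (simp add: \<mu>_def)
  have "a = (((A *v x) \<bullet> (A *v x)) / (x \<bullet> x)) *\<^sub>R w"
    using H[of x] assms(3) by (intro scaleR_eq_scaleR_imp_eq_divide) auto
  then have a: "a = \<mu> *\<^sub>R w"
    by (simp add: \<mu>_def)
  fix y
  have "(\<mu> * (y \<bullet> y)) *\<^sub>R w = ((A *v y) \<bullet> (A *v y)) *\<^sub>R w"
    using H[of y] by (simp add: a mult.commute)
  then show "(A *v y) \<bullet> (A *v y) = \<mu> * (y \<bullet> y)"
    using assms(2) by simp
qed

lemma conformal_if_no_orthogonal_vector:
  fixes A :: "real^'n^'n" and d :: "real^'n"
  assumes "inj ((*v) A)" and no_orth: "\<And>x. x \<noteq> 0 \<Longrightarrow> x \<bullet> d \<noteq> 0"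
  shows "\<exists>\<mu>>0. \<forall>y. (A *v y) \<bullet> (A *v y) = \<mu> * (y \<bullet> y)"
proof (intro exI conjI allI)
  have "d \<noteq> 0"
    using no_orth[of "axis undefined 1"] by (auto simp: axis_eq_0_iff)
  then have dd: "d \<bullet> d > 0" by simp
  define \<mu> where "\<mu> = ((A *v d) \<bullet> (A *v d)) / (d \<bullet> d)"
  have "A *v d \<noteq> 0"
    using assms(1) \<open>d \<noteq> 0\<close> vec.inj_iff_eq_0 by blast
  then show "\<mu> > 0"
    using dd by (simp add: \<mu>_def)
  fix y
  have "(y - ((y \<bullet> d) / (d \<bullet> d)) *\<^sub>R d) \<bullet> d = 0"
    using dd by (simp add: inner_diff_left)
  then have "y - ((y \<bullet> d) / (d \<bullet> d)) *\<^sub>R d = 0"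
    using no_orth by blast
  then obtain t where "y = t *\<^sub>R d"
    by (metis diff_eq_eq add_0)
  then show "(A *v y) \<bullet> (A *v y) = \<mu> * (y \<bullet> y)"
    using dd by (simp add: \<mu>_def matrix_vector_mult_scaleR)
qed

lemma scaled_orthogonal_matrix_if_conformal:
  fixes A :: "real^'n^'n"
  assumes "\<mu> > 0" and "\<And>x. (A *v x) \<bullet> (A *v x) = \<mu> * (x \<bullet> x)"
  shows "\<exists>c T. c > 0 \<and> orthogonal_matrix T \<and> A = c *\<^sub>R T"
proof (intro exI conjI)
  define T where "T = (1 / sqrt \<mu>) *\<^sub>R A"
  have "norm (T *v x) = norm x" for x
  proof -
    have "T *v x = (1 / sqrt \<mu>) *\<^sub>R (A *v x)"
      by (metis T_def matrix_scaleR_vector_ac matrix_vector_mult_scaleR)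
    then have "(T *v x) \<bullet> (T *v x) = (1 / sqrt \<mu>)\<^sup>2 * ((A *v x) \<bullet> (A *v x))"
      by (simp add: power2_eq_square)
    also have "\<dots> = x \<bullet> x"
      using assms by (simp add: power_divide)
    finally show ?thesis
      by (simp add: norm_eq_sqrt_inner)
  qed
  then have "orthogonal_transformation ((*v) T)"
    by (simp add: orthogonal_transformation)
  then show "orthogonal_matrix T"
    by (metis orthogonal_transformation_matrix matrix_of_matrix_vector_mul)
  show "A = sqrt \<mu> *\<^sub>R T" "sqrt \<mu> > 0"
    using assms(1) by (simp_all add: T_def)
qed

theorem lemma3p2:
  fixes v w :: "real^'n" and A :: "real^'n^'n"
  assumes "v \<noteq> 0" and "w \<noteq> 0" and "invertible A"
    and "\<And>xi eta. A *v Qmap v xi eta = Qmap w (A *v xi) (A *v eta)"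
  shows "\<exists>c T. c > 0 \<and> orthogonal_matrix T \<and> A = c *\<^sub>R T"
proof -
  have inj: "inj ((*v) A)"
    using assms(3) by (rule inj_matrix_vector_mult)
  define d where "d = v - w v* A"
  have H: "(xi \<bullet> eta) *\<^sub>R (A *v v) - ((A *v xi) \<bullet> (A *v eta)) *\<^sub>R w
      = (xi \<bullet> d) *\<^sub>R (A *v eta) + (eta \<bullet> d) *\<^sub>R (A *v xi)" for xi eta
    unfolding d_def using assms(4) by (rule Qmap_intertwining_defect)
  have "\<exists>\<mu>>0. \<forall>y. (A *v y) \<bullet> (A *v y) = \<mu> * (y \<bullet> y)"
  proof (cases "\<exists>x. x \<noteq> 0 \<and> x \<bullet> d = 0")
    case True
    then obtain x where "x \<noteq> 0" "x \<bullet> d = 0" by blast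
    then have "d = 0"
      by (rule defect_eq_0_if_orthogonal_vector[OF inj H])
    then show ?thesis
      using conformal_if_defect_eq_0[OF inj assms(2) \<open>x \<noteq> 0\<close>, of "A *v v"] H by simp
  next
    case False
    then show ?thesis
      using conformal_if_no_orthogonal_vector[OF inj] by blast
  qed
  then show ?thesis
    using scaled_orthogonal_matrix_if_conformal by blast
qed

end
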